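(* Let $x\in P$ be a search point in the population $P$ of DEMO on the weighted vertex cover problem such that $Cost(x)+2\cdot LP(x)\le 2\cdot OPT$ and $b_2(x)>0$. Then there exists a 1-bit flip of $x$ leading to a search point $x'$ with $Cost(x')+2\cdot LP(x')\le 2\cdot OPT$ and $b_2(x')<b_2(x)$.
   Context: Weighted vertex cover: $G=(V,E)$, $V=\{v_1,\dots,v_n\}$, $w:V\to\mathbb{N}^+$; $OPT$ is the minimum weight of a vertex cover. Search points $x\in\{0,1\}^n$; $Cost(x)=\sum_i w(v_i)x_i$; $G(x)=(V(x),E(x))$ with $V(x)=V\setminus\{v_i:x_i=1\}$, $E(x)$ = edges with no selected endpoint; $LP(x)$ = optimal value of: minimize $\sum_{v_i\in V(x)}w(v_i)y_i$ s.t. $y_i+y_j\ge1$ for $\{v_i,v_j\}\in E(x)$, $0\le y_i\le1$. $f(x)=(Cost(x),LP(x))$, $f(x)\le f(y)$ componentwise. DEMO: $\delta=\frac1{2n}$, $b_1(x)=\lceil\log_{1+\delta}(1+Cost(x))\rceil$, $b_2(x)=\lceil\log_{1+\delta}(1+LP(x))\rceil$, $b=(b_1,b_2)$. Start with uniformly random $x$, $P=\{x\}$. Each iteration: choose $x\in P$ uniformly; create $x'$ by flipping each bit independently with probability $1/n$; if some $y\in P$ satisfies ($f(y)\le f(x')$ and $f(y)\ne f(x')$) or ($b(y)=b(x')$ and $Cost(y)+2LP(y)\le Cost(x')+2LP(x')$), discard $x'$; otherwise add $x'$ and delete all other $z\in P$ with $f(x')\le f(z)$ or $b(z)=b(x')$.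 *)

theory Defs
  imports Complex_Main
begin

text \<open>A search point x :: nat \<Rightarrow> bool; bit i (for i < n) selects vertex i.\<close>

definition wvc_graph :: "nat \<Rightarrow> nat set set \<Rightarrow> (nat \<Rightarrow> nat) \<Rightarrow> bool" where
  "wvc_graph n E w \<longleftrightarrow>
     (\<forall>e\<in>E. \<exists>i j. i < n \<and> j < n \<and> i \<noteq> j \<and> e = {i, j}) \<and> (\<forall>i<n. w i > 0)"

definition Cost :: "nat \<Rightarrow> (nat \<Rightarrow> nat) \<Rightarrow> (nat \<Rightarrow> bool) \<Rightarrow> real" where
  "Cost n w x = (\<Sum>i<n. real (w i) * (if x i then 1 else 0))"

definition is_vertex_cover :: "nat \<Rightarrow> nat set set \<Rightarrow> (nat \<Rightarrow> bool) \<Rightarrow> bool" where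
  "is_vertex_cover n E x \<longleftrightarrow> (\<forall>e\<in>E. \<exists>i\<in>e. i < n \<and> x i)"

definition OPT :: "nat \<Rightarrow> nat set set \<Rightarrow> (nat \<Rightarrow> nat) \<Rightarrow> real" where
  "OPT n E w = Inf {Cost n w x | x. is_vertex_cover n E x}"

definition Vx :: "nat \<Rightarrow> (nat \<Rightarrow> bool) \<Rightarrow> nat set" where
  "Vx n x = {i. i < n \<and> \<not> x i}"

definition Ex :: "nat set set \<Rightarrow> (nat \<Rightarrow> bool) \<Rightarrow> nat set set" where
  "Ex E x = {e\<in>E. \<forall>i\<in>e. \<not> x i}"

definition LP_feasible :: "nat \<Rightarrow> nat set set \<Rightarrow> (nat \<Rightarrow> bool) \<Rightarrow> (nat \<Rightarrow> real) \<Rightarrow> bool" where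
  "LP_feasible n E x y \<longleftrightarrow>
     (\<forall>i\<in>Vx n x. 0 \<le> y i \<and> y i \<le> 1) \<and>
     (\<forall>i j. {i, j} \<in> Ex E x \<longrightarrow> y i + y j \<ge> 1)"

text \<open>Optimal value of the LP relaxation on G(x) (the optimum is attained, so Inf = min).\<close>
definition LP :: "nat \<Rightarrow> nat set set \<Rightarrow> (nat \<Rightarrow> nat) \<Rightarrow> (nat \<Rightarrow> bool) \<Rightarrow> real" where
  "LP n E w x = Inf {(\<Sum>i\<in>Vx n x. real (w i) * y i) | y. LP_feasible n E x y}"

definition delta :: "nat \<Rightarrow> real" where
  "delta n = 1 / (2 * real n)"

definition b1 :: "nat \<Rightarrow> (nat \<Rightarrow> nat) \<Rightarrow> (nat \<Rightarrow> bool) \<Rightarrow> int" where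
  "b1 n w x = \<lceil>log (1 + delta n) (1 + Cost n w x)\<rceil>"

definition b2 :: "nat \<Rightarrow> nat set set \<Rightarrow> (nat \<Rightarrow> nat) \<Rightarrow> (nat \<Rightarrow> bool) \<Rightarrow> int" where
  "b2 n E w x = \<lceil>log (1 + delta n) (1 + LP n E w x)\<rceil>"

end

theory Submission
  imports Defs "HOL-Library.FuncSet"
begin

text \<open>The LP relaxation of vertex cover is half-integral: shifting the fractional coordinates
  below and above 1/2 by the same amount in opposite directions keeps every edge constraint, and
  one of the two directions does not increase the cost; iterating yields an optimal solution with values in
  \<open>{0, 1/2, 1}\<close>. For such a solution, let \<open>v\<close> maximise the contribution \<open>m = w v * y v\<close>,
  so \<open>m \<ge> LP/n\<close> and \<open>y v \<ge> 1/2\<close>. Selecting \<open>v\<close> raises the cost by \<open>w v \<le> 2m\<close> and lowers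
  the LP value by at least \<open>m\<close>, which is enough to shrink \<open>1 + LP\<close> by a factor \<open>1 + \<delta>\<close>.\<close>

definition lp_cost :: "nat \<Rightarrow> (nat \<Rightarrow> nat) \<Rightarrow> (nat \<Rightarrow> bool) \<Rightarrow> (nat \<Rightarrow> real) \<Rightarrow> real" where
  "lp_cost n w x y = (\<Sum>i\<in>Vx n x. real (w i) * y i)"

definition fractional_vertices :: "nat \<Rightarrow> (nat \<Rightarrow> bool) \<Rightarrow> (nat \<Rightarrow> real) \<Rightarrow> nat set" where
  "fractional_vertices n x y = {i \<in> Vx n x. y i \<notin> {0, 1/2, 1}}"

lemma finite_Vx: "finite (Vx n x)"
  unfolding Vx_def by auto

lemma finite_fractional_vertices: "finite (fractional_vertices n x y)"
  unfolding fractional_vertices_def using finite_Vx by auto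

lemma Ex_edge_in_Vx:
  assumes "wvc_graph n E w" "{i, j} \<in> Ex E x"
  shows "i \<in> Vx n x" "j \<in> Vx n x"
proof -
  from assms(2) have e: "{i, j} \<in> E" "\<not> x i" "\<not> x j" unfolding Ex_def by auto
  from assms(1) e(1) obtain a b where "a < n" "b < n" "{i, j} = {a, b}"
    unfolding wvc_graph_def by blast
  then have "i < n" "j < n" by (metis doubleton_eq_iff)+
  with e show "i \<in> Vx n x" "j \<in> Vx n x" unfolding Vx_def by auto
qed

lemma LP_feasible_const_one: "LP_feasible n E x (\<lambda>_. 1)"
  unfolding LP_feasible_def by auto

lemma lp_cost_nonneg: "LP_feasible n E x y \<Longrightarrow> 0 \<le> lp_cost n w x y"
  unfolding lp_cost_def LP_feasible_def by (auto intro!: sum_nonneg)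

lemma LP_eq_Inf_lp_cost: "LP n E w x = Inf (lp_cost n w x ` Collect (LP_feasible n E x))"
  unfolding LP_def lp_cost_def by (simp add: setcompr_eq_image)

lemma LP_le_lp_cost: "LP_feasible n E x y \<Longrightarrow> LP n E w x \<le> lp_cost n w x y"
  unfolding LP_eq_Inf_lp_cost by (rule cInf_lower) (auto intro: bdd_belowI[of _ 0] lp_cost_nonneg)

lemma LP_nonneg: "0 \<le> LP n E w x"
  unfolding LP_eq_Inf_lp_cost using LP_feasible_const_one
  by (intro cInf_greatest) (auto intro: lp_cost_nonneg)

subsection \<open>Half-integrality of the LP relaxation\<close>

lemma LP_feasible_shift_fractional:
  assumes G: "wvc_graph n E w" and F: "LP_feasible n E x y"
    and fixed: "\<And>i. i \<notin> fractional_vertices n x y \<Longrightarrow> z i = y i"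
    and lower_half: "\<And>i. i \<in> fractional_vertices n x y \<Longrightarrow> y i < 1/2 \<Longrightarrow> 0 \<le> z i \<and> z i \<le> 1/2"
    and upper_half: "\<And>i. i \<in> fractional_vertices n x y \<Longrightarrow> y i > 1/2 \<Longrightarrow> 1/2 \<le> z i \<and> z i \<le> 1"
    and opposite: "\<And>i j. i \<in> fractional_vertices n x y \<Longrightarrow> j \<in> fractional_vertices n x y \<Longrightarrow>
      y i < 1/2 \<Longrightarrow> y j > 1/2 \<Longrightarrow> z i + z j = y i + y j"
  shows "LP_feasible n E x z"
proof -
  let ?N = "fractional_vertices n x y"
  have y01: "0 \<le> y i \<and> y i \<le> 1" if "i \<in> Vx n x" for i
    using F that unfolding LP_feasible_def by auto
  have frac: "i \<in> ?N" if "i \<in> Vx n x" "0 < y i" "y i < 1" "y i \<noteq> 1/2" for i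
    using that unfolding fractional_vertices_def by auto
  have z01: "0 \<le> z i \<and> z i \<le> 1" if "i \<in> Vx n x" for i
  proof (cases "i \<in> ?N")
    case True
    then have "y i \<noteq> 1/2" unfolding fractional_vertices_def by auto
    then show ?thesis using lower_half[OF True] upper_half[OF True] by (cases "y i < 1/2") auto
  next
    case False
    then show ?thesis using fixed y01 that by auto
  qed
  have z_half: "1/2 \<le> z i" if "i \<in> Vx n x" "1/2 \<le> y i" for i
  proof (cases "i \<in> ?N")
    case True
    then have "y i \<noteq> 1/2" unfolding fractional_vertices_def by auto
    then show ?thesis using upper_half[OF True] that(2) by auto
  next
    case False
    then show ?thesis using fixed that(2) by auto
  qed
  have edge: "z i + z j \<ge> 1" if "{i, j} \<in> Ex E x" "y i < 1/2" for i j
  proof -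
    have V: "i \<in> Vx n x" "j \<in> Vx n x" using Ex_edge_in_Vx[OF G that(1)] by auto
    have sum: "y i + y j \<ge> 1" using F that(1) unfolding LP_feasible_def by auto
    show ?thesis
    proof (cases "y j = 1")
      case True
      then have "j \<notin> ?N" unfolding fractional_vertices_def by auto
      then show ?thesis using fixed True z01[OF V(1)] by auto
    next
      case False
      have "y j \<le> 1" "y i \<ge> 0" using y01 V by auto
      then have "i \<in> ?N" "j \<in> ?N" using frac V sum that(2) False by auto
      then show ?thesis using opposite that(2) sum by force
    qed
  qed
  have "z i + z j \<ge> 1" if "{i, j} \<in> Ex E x" for i j
  proof -
    consider "y i < 1/2" | "y j < 1/2" | "1/2 \<le> y i" "1/2 \<le> y j" by linarith
    then show ?thesis
    proof cases
      case 2
      have "{j, i} \<in> Ex E x" using that by (simp add: insert_commute)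
      then show ?thesis using edge 2 by force
    next
      case 3
      then have "1/2 \<le> z i" "1/2 \<le> z j" using z_half Ex_edge_in_Vx[OF G that] by auto
      then show ?thesis by linarith
    qed (use edge that in auto)
  qed
  then show ?thesis unfolding LP_feasible_def using z01 by auto
qed

lemma fractional_vertices_reduction:
  assumes G: "wvc_graph n E w" and F: "LP_feasible n E x y"
    and nonempty: "fractional_vertices n x y \<noteq> {}"
  obtains z where "LP_feasible n E x z" "lp_cost n w x z \<le> lp_cost n w x y"
    "card (fractional_vertices n x z) < card (fractional_vertices n x y)"
proof -
  define N where "N = fractional_vertices n x y"
  have finN: "finite N" using finite_fractional_vertices N_def by simp
  have yN: "0 < y i \<and> y i < 1 \<and> y i \<noteq> 1/2" if "i \<in> N" for i
    using that F unfolding N_def fractional_vertices_def LP_feasible_def by force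
  define d where "d i = (if i \<in> N then if y i > 1/2 then 1 else -1 else 0 :: real)" for i
  define s where "s = (if lp_cost n w x d \<le> 0 then 1 else -1 :: real)"
  \<comment> \<open>\<open>gap i\<close> is the distance from \<open>y i\<close> to the next point of \<open>{0, 1/2, 1}\<close> in direction \<open>s * d i\<close>\<close>
  define gap where "gap i = (if s * d i = 1 then if y i > 1/2 then 1 - y i else 1/2 - y i
                             else if y i > 1/2 then y i - 1/2 else y i)" for i
  define t where "t = Min (gap ` N)"
  define z where "z i = y i + t * (s * d i)" for i
  have dir: "s * d i = 1 \<or> s * d i = -1" if "i \<in> N" for i
    using that unfolding s_def d_def by auto
  have "t \<in> gap ` N" unfolding t_def using finN nonempty N_def by simp
  then obtain i0 where i0: "i0 \<in> N" "t = gap i0" by auto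
  have t_le: "t \<le> gap i" if "i \<in> N" for i unfolding t_def using finN that by simp
  have "t > 0" using i0 yN[OF i0(1)] dir[OF i0(1)] unfolding gap_def by auto
  have cost: "lp_cost n w x z = lp_cost n w x y + t * (s * lp_cost n w x d)"
    unfolding lp_cost_def z_def by (simp add: algebra_simps sum.distrib sum_distrib_left)
  have "s * lp_cost n w x d \<le> 0" unfolding s_def by auto
  with cost \<open>t > 0\<close> have cost_le: "lp_cost n w x z \<le> lp_cost n w x y"
    by (simp add: mult_nonneg_nonpos)
  have fixed: "z i = y i" if "i \<notin> N" for i
    using that unfolding z_def d_def by simp
  have halves: "(y i < 1/2 \<longrightarrow> 0 \<le> z i \<and> z i \<le> 1/2) \<and> (y i > 1/2 \<longrightarrow> 1/2 \<le> z i \<and> z i \<le> 1)"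
    if "i \<in> N" for i
    using dir[OF that] t_le[OF that] \<open>t > 0\<close> yN[OF that] unfolding z_def gap_def
    by (elim disjE; cases "y i > 1/2") simp_all
  have "LP_feasible n E x z"
  proof (rule LP_feasible_shift_fractional[OF G F])
    fix i j assume "i \<in> fractional_vertices n x y" "j \<in> fractional_vertices n x y"
      "y i < 1/2" "y j > 1/2"
    then show "z i + z j = y i + y j" unfolding z_def d_def N_def by simp
  qed (use fixed halves N_def in auto)
  moreover have "fractional_vertices n x z \<subseteq> N - {i0}"
  proof
    fix i assume i: "i \<in> fractional_vertices n x z"
    have "i \<in> N" using i fixed[of i] unfolding N_def fractional_vertices_def by auto
    moreover have "z i0 \<in> {0, 1/2, 1}"
      using dir[OF i0(1)] i0(2) unfolding z_def gap_def by auto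
    then have "i \<noteq> i0" using i unfolding fractional_vertices_def by auto
    ultimately show "i \<in> N - {i0}" by simp
  qed
  with i0(1) have "fractional_vertices n x z \<subset> N" by blast
  then have "card (fractional_vertices n x z) < card N"
    by (rule psubset_card_mono[OF finN])
  ultimately show ?thesis using that cost_le N_def by blast
qed

lemma exists_half_integral_le:
  assumes G: "wvc_graph n E w" and F: "LP_feasible n E x y"
  obtains z where "LP_feasible n E x z" "fractional_vertices n x z = {}"
    "lp_cost n w x z \<le> lp_cost n w x y"
  using F
proof (induction "card (fractional_vertices n x y)" arbitrary: y thesis rule: less_induct)
  case less
  show ?case
  proof (cases "fractional_vertices n x y = {}")
    case True
    then show ?thesis using less.prems by blast
  next
    case False
    obtain z where z: "LP_feasible n E x z" "lp_cost n w x z \<le> lp_cost n w x y"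
      "card (fractional_vertices n x z) < card (fractional_vertices n x y)"
      using fractional_vertices_reduction[OF G less.prems(2) False] by blast
    show ?thesis
      by (rule less.hyps[OF z(3) _ z(1)]) (use less.prems(1) z(2) in fastforce)
  qed
qed

lemma LP_attained_half_integral:
  assumes G: "wvc_graph n E w"
  obtains y where "LP_feasible n E x y" "fractional_vertices n x y = {}"
    "lp_cost n w x y = LP n E w x"
proof -
  let ?H = "{y. LP_feasible n E x y \<and> fractional_vertices n x y = {}}"
  let ?C = "lp_cost n w x ` ?H"
  have "?C \<subseteq> lp_cost n w x ` (Vx n x \<rightarrow>\<^sub>E {0, 1/2, 1})"
  proof
    fix c assume "c \<in> ?C"
    then obtain y where y: "y \<in> ?H" "c = lp_cost n w x y" by auto
    then have "restrict y (Vx n x) \<in> Vx n x \<rightarrow>\<^sub>E {0, 1/2, 1}"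
      unfolding fractional_vertices_def by auto
    moreover have "lp_cost n w x (restrict y (Vx n x)) = c"
      using y(2) unfolding lp_cost_def by simp
    ultimately show "c \<in> lp_cost n w x ` (Vx n x \<rightarrow>\<^sub>E {0, 1/2, 1})" by blast
  qed
  then have finC: "finite ?C"
    by (rule finite_subset) (simp add: finite_PiE finite_Vx)
  have "(\<lambda>_. 1) \<in> ?H"
    using LP_feasible_const_one unfolding fractional_vertices_def by auto
  then have "?C \<noteq> {}" by blast
  with finC have "Min ?C \<in> ?C" by (rule Min_in)
  then obtain y where y: "y \<in> ?H" "lp_cost n w x y = Min ?C" by auto
  have "LP n E w x = Min ?C"
    unfolding LP_eq_Inf_lp_cost
  proof (rule cInf_eq_minimum)
    show "Min ?C \<in> lp_cost n w x ` Collect (LP_feasible n E x)"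
      using y by (metis (mono_tags, lifting) image_eqI mem_Collect_eq)
  next
    fix c assume "c \<in> lp_cost n w x ` Collect (LP_feasible n E x)"
    then obtain y' where "LP_feasible n E x y'" "c = lp_cost n w x y'" by auto
    moreover obtain z where "z \<in> ?H" "lp_cost n w x z \<le> lp_cost n w x y'"
      using exists_half_integral_le[OF G \<open>LP_feasible n E x y'\<close>] by blast
    moreover have "Min ?C \<le> lp_cost n w x z" using finC \<open>z \<in> ?H\<close> by simp
    ultimately show "Min ?C \<le> c" by linarith
  qed
  with y show ?thesis by (intro that[of y]) auto
qed

lemma Cost_fun_upd_True:
  assumes "\<not> x v" "v < n"
  shows "Cost n w (x(v := True)) = Cost n w x + real (w v)"
proof -
  have "Cost n w (x(v := True)) - Cost n w x = (\<Sum>i<n. if i = v then real (w v) else 0)"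
    unfolding Cost_def sum_subtractf[symmetric] using assms(1) by (intro sum.cong) auto
  then show ?thesis using assms(2) by simp
qed

lemma LP_feasible_fun_upd_True: "LP_feasible n E x y \<Longrightarrow> LP_feasible n E (x(v := True)) y"
  unfolding LP_feasible_def Vx_def Ex_def by auto

lemma lp_cost_fun_upd_True:
  assumes "v \<in> Vx n x"
  shows "lp_cost n w (x(v := True)) y = lp_cost n w x y - real (w v) * y v"
proof -
  have "Vx n (x(v := True)) = Vx n x - {v}" unfolding Vx_def by auto
  then show ?thesis unfolding lp_cost_def using assms finite_Vx by (simp add: sum_diff1)
qed

lemma exists_vertex_LP_drop:
  assumes G: "wvc_graph n E w" and pos: "0 < LP n E w x"
  obtains v m where "v \<in> Vx n x" "real (w v) \<le> 2 * m" "LP n E w x \<le> real n * m"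
    "LP n E w (x(v := True)) \<le> LP n E w x - m"
proof -
  obtain y where y: "LP_feasible n E x y" "fractional_vertices n x y = {}"
    "lp_cost n w x y = LP n E w x"
    using LP_attained_half_integral[OF G] by blast
  define V where "V = Vx n x"
  define f where "f i = real (w i) * y i" for i
  have LP_sum: "LP n E w x = sum f V" using y(3) unfolding lp_cost_def f_def V_def by simp
  have finV: "finite V" unfolding V_def by (rule finite_Vx)
  have "V \<noteq> {}"
  proof
    assume "V = {}"
    then show False using pos LP_sum by simp
  qed
  with finV have "Max (f ` V) \<in> f ` V" by simp
  then obtain v where v: "v \<in> V" "f v = Max (f ` V)" by auto
  have f_le: "f i \<le> f v" if "i \<in> V" for i
    using Max_ge[OF finite_imageI[OF finV] imageI[of i V f, OF that]] v(2) by linarith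
  have y_half: "y v \<in> {0, 1/2, 1}" using y(2) v(1) unfolding fractional_vertices_def V_def by blast
  have "sum f V \<le> (\<Sum>i\<in>V. f v)" using f_le by (rule sum_mono)
  then have "LP n E w x \<le> real (card V) * f v" using LP_sum by simp
  also have "\<dots> \<le> real n * f v"
  proof (rule mult_right_mono)
    show "real (card V) \<le> real n"
      using card_mono[of "{..<n}" V] unfolding V_def Vx_def by auto
    show "0 \<le> f v" using y_half unfolding f_def by auto
  qed
  finally have LP_le: "LP n E w x \<le> real n * f v" .
  then have "y v \<noteq> 0" using pos unfolding f_def by auto
  then have "1/2 \<le> y v" using y_half by auto
  then have "real (w v) * 1 \<le> real (w v) * (2 * y v)" by (intro mult_left_mono) auto
  then have w_le: "real (w v) \<le> 2 * f v" unfolding f_def by simp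
  have "LP n E w (x(v := True)) \<le> lp_cost n w (x(v := True)) y"
    by (rule LP_le_lp_cost[OF LP_feasible_fun_upd_True[OF y(1)]])
  then have drop: "LP n E w (x(v := True)) \<le> LP n E w x - f v"
    using lp_cost_fun_upd_True[of v n x w y] v(1) y(3) unfolding V_def f_def by simp
  from v(1) w_le LP_le drop show ?thesis unfolding V_def by (rule that)
qed

lemma one_plus_delta_mult_le:
  fixes L L' m :: real
  assumes n: "1 \<le> n" and drop: "L' \<le> L - m" and L: "L \<le> real n * m" and m: "1/2 \<le> m"
  shows "(1 + L') * (1 + delta n) \<le> 1 + L"
proof -
  have "1/2 * 2 \<le> m * (real n + 1)" using n m by (intro mult_mono) auto
  with L have "(1 + L - m) * (2 * real n + 1) \<le> (1 + L) * (2 * real n)"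
    by (simp add: algebra_simps)
  then have "(1 + L - m) * (1 + delta n) \<le> 1 + L"
    using n by (simp add: delta_def field_simps)
  moreover have "(1 + L') * (1 + delta n) \<le> (1 + L - m) * (1 + delta n)"
    using drop by (intro mult_right_mono) (auto simp: delta_def)
  ultimately show ?thesis by linarith
qed

lemma b2_pos_imp:
  assumes "0 < b2 n E w x"
  shows "1 \<le> n" "0 < LP n E w x"
proof -
  \<comment> \<open>for \<open>n = 0\<close> the base of the logarithm is \<open>1 + 1/0 = 1\<close>, and \<open>log 1 = 0\<close>\<close>
  show "1 \<le> n"
  proof (rule ccontr)
    assume "\<not> 1 \<le> n"
    then have "n = 0" by simp
    then have "b2 n E w x = 0" unfolding b2_def delta_def log_def by simp
    with assms show False by simp
  qed
  show "0 < LP n E w x"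
  proof (rule ccontr)
    assume "\<not> 0 < LP n E w x"
    then have "b2 n E w x = 0" using LP_nonneg[of n E w x] unfolding b2_def by simp
    with assms show False by simp
  qed
qed

lemma ceiling_log_less:
  fixes a b c :: real
  assumes "1 < b" "0 < a" "a * b \<le> c"
  shows "\<lceil>log b a\<rceil> < \<lceil>log b c\<rceil>"
proof -
  have "log b a + 1 = log b (a * b)" using assms(1,2) by (simp add: log_mult)
  also have "\<dots> \<le> log b c"
  proof -
    have "0 < a * b" using assms(1,2) by simp
    then have "0 < c" using assms(3) by linarith
    with assms show ?thesis by (subst log_le_cancel_iff) auto
  qed
  finally have "\<lceil>log b a + 1\<rceil> \<le> \<lceil>log b c\<rceil>" by (rule ceiling_mono)
  then show ?thesis by simp
qed

theorem lemma8:
  fixes n :: nat and E :: "nat set set" and w :: "nat \<Rightarrow> nat" and x :: "nat \<Rightarrow> bool"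
  assumes "wvc_graph n E w"
    and "Cost n w x + 2 * LP n E w x \<le> 2 * OPT n E w"
    and "b2 n E w x > 0"
  shows "\<exists>i<n. Cost n w (x(i := \<not> x i)) + 2 * LP n E w (x(i := \<not> x i)) \<le> 2 * OPT n E w
               \<and> b2 n E w (x(i := \<not> x i)) < b2 n E w x"
proof -
  note n = b2_pos_imp(1)[OF assms(3)]
  obtain v m where v: "v \<in> Vx n x" and w_le: "real (w v) \<le> 2 * m"
    and LP_le: "LP n E w x \<le> real n * m" and drop: "LP n E w (x(v := True)) \<le> LP n E w x - m"
    using exists_vertex_LP_drop[OF assms(1) b2_pos_imp(2)[OF assms(3)]] by blast
  have v_free: "v < n" "\<not> x v" using v unfolding Vx_def by auto
  then have "1 \<le> real (w v)" using assms(1) unfolding wvc_graph_def by auto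
  with w_le have m: "1/2 \<le> m" by simp
  have "Cost n w (x(v := True)) + 2 * LP n E w (x(v := True)) \<le> 2 * OPT n E w"
    using Cost_fun_upd_True[of x v n w, OF v_free(2,1)] assms(2) w_le drop by simp
  moreover have "b2 n E w (x(v := True)) < b2 n E w x"
    unfolding b2_def
  proof (rule ceiling_log_less)
    show "1 < 1 + delta n" using n by (simp add: delta_def)
    show "0 < 1 + LP n E w (x(v := True))" using LP_nonneg[of n E w "x(v := True)"] by simp
    show "(1 + LP n E w (x(v := True))) * (1 + delta n) \<le> 1 + LP n E w x"
      using one_plus_delta_mult_le[OF n drop LP_le m] .
  qed
  moreover have "x(v := \<not> x v) = x(v := True)" using v_free by simp
  ultimately show ?thesis using v_free(1) by auto
qed

end
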